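(* (Convergence of the one-dimensional Crank–Nicolson collocation scheme.) Consider the nonlocal problem $$\partial_t u(x,t)+\int_a^b\frac{u(x,t)-u(y,t)}{|x-y|^{\gamma}}\,dy=f(x,t),\qquad (x,t)\in(a,b)\times(0,T],$$ with $0<\gamma<1$, Dirichlet boundary values $u(a,t),u(b,t)$ and initial value $u(x,0)=u_0(x)$, and let $U^k\in\mathbb R^{2M-1}$, $k=0,\dots,N$, be the Crank–Nicolson collocation approximation defined in the context. Assume the exact solution $u$ is smooth enough that the truncation residual satisfies $|R^{k-1/2}_i|\le C_R(\tau^2+h^{4-\gamma})$ for all $i=1,\dots,2M-1$, $k=1,\dots,N$, with a constant $C_R$ independent of $\tau,h,i,k$. Then, with $C_a=\frac{2(b-a)^{1-\gamma}}{1-\gamma}$, $$\max_{1\le i\le 2M-1}\big|u(x_{i/2},t_k)-U^k_i\big|\le C_R\,T\,e^{TC_a}\,(\tau^2+h^{4-\gamma}),\qquad k=0,1,\dots,N;$$ that is, the error is $\mathcal O(\tau^2+h^{4-\gamma})$.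
   Context: Fix real numbers $a<b$, an exponent $\gamma\in(0,1)$ and an integer $M\ge 2$. Set $h=(b-a)/M$ and $x_s=a+sh$ for $s\in\{0,\tfrac12,1,\tfrac32,\dots,M\}$. The piecewise quadratic Lagrange basis functions on $[a,b]$ are: for integers $0\le l\le M$, $\phi_l(x)=\frac{x-x_{l-1}}{h}\cdot\frac{2x-(x_l+x_{l-1})}{h}$ for $x\in[x_{l-1},x_l]\cap[a,b]$, $\phi_l(x)=\frac{x_{l+1}-x}{h}\cdot\frac{(x_{l+1}+x_l)-2x}{h}$ for $x\in[x_l,x_{l+1}]\cap[a,b]$, and $\phi_l(x)=0$ otherwise; and for $l=1,\dots,M$, $\phi_{l-\frac12}(x)=\frac{4(x-x_{l-1})(x_l-x)}{h^2}$ for $x\in[x_{l-1},x_l]$ and $0$ otherwise. For $i\in\{1,\dots,2M-1\}$ and $j\in\{0,1,\dots,2M\}$ define $$d_i=\int_a^b\frac{dy}{|x_{i/2}-y|^{\gamma}},\qquad g_{ij}=\int_a^b\frac{\phi_{j/2}(y)}{|x_{i/2}-y|^{\gamma}}\,dy .$$ The one-dimensional collocation matrix is the $(2M-1)\times(2M-1)$ matrix $\mathcal A$ with entries $A_{ij}=\delta_{ij}d_i-g_{ij}$, $i,j\in\{1,\dots,2M-1\}$. The following fact, established in earlier work, may be used: $g_{ij}>0$ for all $i,j\in\{1,\dots,2M-1\}$, and $\mathcal A$ is strictly diagonally dominant by rows. Time discretization: $T>0$, $N\ge1$, $\tau=T/N$, $t_k=k\tau$, $t_{k-1/2}=(t_{k-1}+t_k)/2$.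 The Crank–Nicolson collocation scheme: $U^0_i=u_0(x_{i/2})$, and for $k=1,\dots,N$, $$\Big(I+\frac{\tau}{2}\mathcal A\Big)U^k=\Big(I-\frac{\tau}{2}\mathcal A\Big)U^{k-1}+\tau F^{k-1/2}+\tau K^{k-1/2},$$ where $F^{k-1/2}_i=f(x_{i/2},t_{k-1/2})$ and $K^{k-1/2}_i=\tfrac12 g_{i,0}\big(u(a,t_{k-1})+u(a,t_k)\big)+\tfrac12 g_{i,2M}\big(u(b,t_{k-1})+u(b,t_k)\big)$ (boundary contributions). The truncation residual $R^{k-1/2}\in\mathbb R^{2M-1}$ is defined by inserting the exact nodal values $u^k=(u(x_{i/2},t_k))_{i=1}^{2M-1}$ into the scheme: $$\tau R^{k-1/2}=\Big(I+\frac{\tau}{2}\mathcal A\Big)u^k-\Big(I-\frac{\tau}{2}\mathcal A\Big)u^{k-1}-\tau F^{k-1/2}-\tau K^{k-1/2}.$$ *)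

theory Defs
  imports "HOL-Analysis.Analysis"
begin

definition mesh_h :: "real \<Rightarrow> real \<Rightarrow> nat \<Rightarrow> real" where
  "mesh_h a b M = (b - a) / real M"

definition xnode :: "real \<Rightarrow> real \<Rightarrow> nat \<Rightarrow> real \<Rightarrow> real" where
  "xnode a b M s = a + s * mesh_h a b M"

text \<open>Piecewise quadratic Lagrange basis function phi_{j/2}, j = 0..2M.\<close>

definition phi :: "real \<Rightarrow> real \<Rightarrow> nat \<Rightarrow> nat \<Rightarrow> real \<Rightarrow> real" where
  "phi a b M j x =
    (let h = mesh_h a b M; X = xnode a b M in
     if even j then
       (let l = real (j div 2) in
        if a \<le> x \<and> x \<le> b \<and> X (l - 1) \<le> x \<and> x \<le> X l then
          (x - X (l - 1)) / h * ((2 * x - (X l + X (l - 1))) / h)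
        else if a \<le> x \<and> x \<le> b \<and> X l \<le> x \<and> x \<le> X (l + 1) then
          (X (l + 1) - x) / h * (((X (l + 1) + X l) - 2 * x) / h)
        else 0)
     else
       (let l = real ((j + 1) div 2) in
        if X (l - 1) \<le> x \<and> x \<le> X l then
          4 * (x - X (l - 1)) * (X l - x) / h\<^sup>2
        else 0))"

definition dcoef :: "real \<Rightarrow> real \<Rightarrow> real \<Rightarrow> nat \<Rightarrow> nat \<Rightarrow> real" where
  "dcoef a b \<gamma> M i =
     integral {a..b} (\<lambda>y. 1 / \<bar>xnode a b M (real i / 2) - y\<bar> powr \<gamma>)"

definition gcoef :: "real \<Rightarrow> real \<Rightarrow> real \<Rightarrow> nat \<Rightarrow> nat \<Rightarrow> nat \<Rightarrow> real" where
  "gcoef a b \<gamma> M i j =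
     integral {a..b} (\<lambda>y. phi a b M j y / \<bar>xnode a b M (real i / 2) - y\<bar> powr \<gamma>)"

definition Acoll :: "real \<Rightarrow> real \<Rightarrow> real \<Rightarrow> nat \<Rightarrow> nat \<Rightarrow> nat \<Rightarrow> real" where
  "Acoll a b \<gamma> M i j = (if i = j then dcoef a b \<gamma> M i else 0) - gcoef a b \<gamma> M i j"

definition Amul :: "real \<Rightarrow> real \<Rightarrow> real \<Rightarrow> nat \<Rightarrow> (nat \<Rightarrow> real) \<Rightarrow> nat \<Rightarrow> real" where
  "Amul a b \<gamma> M v i = (\<Sum>j = 1..2 * M - 1. Acoll a b \<gamma> M i j * v j)"

definition Kbd :: "real \<Rightarrow> real \<Rightarrow> real \<Rightarrow> nat \<Rightarrow> (real \<Rightarrow> real \<Rightarrow> real) \<Rightarrow> real \<Rightarrow> nat \<Rightarrow> nat \<Rightarrow> real" where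
  "Kbd a b \<gamma> M u \<tau> k i =
     1/2 * gcoef a b \<gamma> M i 0 * (u a (real (k - 1) * \<tau>) + u a (real k * \<tau>))
   + 1/2 * gcoef a b \<gamma> M i (2 * M) * (u b (real (k - 1) * \<tau>) + u b (real k * \<tau>))"

definition Fsrc :: "real \<Rightarrow> real \<Rightarrow> nat \<Rightarrow> (real \<Rightarrow> real \<Rightarrow> real) \<Rightarrow> real \<Rightarrow> nat \<Rightarrow> nat \<Rightarrow> real" where
  "Fsrc a b M f \<tau> k i = f (xnode a b M (real i / 2)) ((real (k - 1) * \<tau> + real k * \<tau>) / 2)"

definition unodal :: "real \<Rightarrow> real \<Rightarrow> nat \<Rightarrow> (real \<Rightarrow> real \<Rightarrow> real) \<Rightarrow> real \<Rightarrow> nat \<Rightarrow> nat \<Rightarrow> real" where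
  "unodal a b M u \<tau> k i = u (xnode a b M (real i / 2)) (real k * \<tau>)"

definition resid :: "real \<Rightarrow> real \<Rightarrow> real \<Rightarrow> nat \<Rightarrow> (real \<Rightarrow> real \<Rightarrow> real) \<Rightarrow> (real \<Rightarrow> real \<Rightarrow> real)
                     \<Rightarrow> real \<Rightarrow> nat \<Rightarrow> nat \<Rightarrow> real" where
  "resid a b \<gamma> M u f \<tau> k i =
    ((unodal a b M u \<tau> k i + \<tau> / 2 * Amul a b \<gamma> M (unodal a b M u \<tau> k) i)
     - (unodal a b M u \<tau> (k - 1) i - \<tau> / 2 * Amul a b \<gamma> M (unodal a b M u \<tau> (k - 1)) i)
     - \<tau> * Fsrc a b M f \<tau> k i - \<tau> * Kbd a b \<gamma> M u \<tau> k i) / \<tau>"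

definition CN_solution :: "real \<Rightarrow> real \<Rightarrow> real \<Rightarrow> nat \<Rightarrow> nat \<Rightarrow> real \<Rightarrow> (real \<Rightarrow> real)
     \<Rightarrow> (real \<Rightarrow> real \<Rightarrow> real) \<Rightarrow> (real \<Rightarrow> real \<Rightarrow> real) \<Rightarrow> (nat \<Rightarrow> nat \<Rightarrow> real) \<Rightarrow> bool" where
  "CN_solution a b \<gamma> M N \<tau> u0 u f U \<longleftrightarrow>
     (\<forall>i \<in> {1..2 * M - 1}. U 0 i = u0 (xnode a b M (real i / 2))) \<and>
     (\<forall>k \<in> {1..N}. \<forall>i \<in> {1..2 * M - 1}.
        U k i + \<tau> / 2 * Amul a b \<gamma> M (U k) i
        = U (k - 1) i - \<tau> / 2 * Amul a b \<gamma> M (U (k - 1)) i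
          + \<tau> * Fsrc a b M f \<tau> k i + \<tau> * Kbd a b \<gamma> M u \<tau> k i)"

end

theory Submission
  imports Defs
begin

text \<open>The nodal error \<open>e\<^sup>k = u\<^sup>k - U\<^sup>k\<close> satisfies the scheme with source \<open>\<tau> R\<close> and \<open>e\<^sup>0 = 0\<close>.
  The diagonal of \<open>A\<close> satisfies \<open>0 < A\<^sub>i\<^sub>i \<le> d\<^sub>i \<le> C\<^sub>a\<close>: \<open>d\<^sub>i\<close> is an explicit integral, and
  \<open>0 < g\<^sub>i\<^sub>i \<le> d\<^sub>i\<close> because the basis functions are bounded by \<open>1\<close>.  With strict diagonal
  dominance, one Crank--Nicolson step therefore increases the maximum norm of the error by at most
  the factor \<open>exp (\<tau> C\<^sub>a)\<close> plus \<open>\<tau> max |R|\<close>, and unrolling this recurrence over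
  \<open>k \<le> N = T/\<tau>\<close> steps gives the bound.\<close>

definition max_norm :: "nat set \<Rightarrow> (nat \<Rightarrow> real) \<Rightarrow> real" where
  "max_norm I v = Max ((\<lambda>i. \<bar>v i\<bar>) ` I)"

lemma abs_le_max_norm: "finite I \<Longrightarrow> i \<in> I \<Longrightarrow> \<bar>v i\<bar> \<le> max_norm I v"
  unfolding max_norm_def by (intro Max_ge) auto

lemma max_norm_attained:
  assumes "finite I" "I \<noteq> {}"
  obtains i where "i \<in> I" "\<bar>v i\<bar> = max_norm I v"
proof -
  have "max_norm I v \<in> (\<lambda>i. \<bar>v i\<bar>) ` I"
    unfolding max_norm_def using assms by (intro Max_in) auto
  then show ?thesis using that by auto
qed

lemma max_norm_nonneg: "finite I \<Longrightarrow> I \<noteq> {} \<Longrightarrow> 0 \<le> max_norm I v"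
  by (metis abs_ge_zero max_norm_attained)

lemma row_offdiag_le:
  fixes A :: "nat \<Rightarrow> nat \<Rightarrow> real"
  assumes "finite I" "i \<in> I"
  shows "\<bar>(\<Sum>j\<in>I. A i j * v j) - A i i * v i\<bar> \<le> (\<Sum>j\<in>I - {i}. \<bar>A i j\<bar>) * max_norm I v"
proof -
  have "\<bar>(\<Sum>j\<in>I. A i j * v j) - A i i * v i\<bar> = \<bar>\<Sum>j\<in>I - {i}. A i j * v j\<bar>"
    using assms by (simp add: sum.remove)
  also have "\<dots> \<le> (\<Sum>j\<in>I - {i}. \<bar>A i j\<bar> * max_norm I v)"
    using assms abs_le_max_norm
    by (intro order.trans[OF sum_abs] sum_mono) (auto simp: abs_mult intro: mult_left_mono)
  finally show ?thesis by (simp add: sum_distrib_right)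
qed

text \<open>Evaluate the step at a row \<open>i\<close> where \<open>|v|\<close> is maximal: dominance absorbs the off-diagonal
  part on the left, and on the right the factor \<open>|1 - \<alpha>A\<^sub>i\<^sub>i| + \<alpha>S\<^sub>i\<close> (with \<open>S\<^sub>i\<close> the off-diagonal
  row sum) is at most \<open>1\<close> or at most \<open>2\<alpha>C\<close>.\<close>

lemma crank_nicolson_step_max_norm:
  fixes A :: "nat \<Rightarrow> nat \<Rightarrow> real" and v w r :: "nat \<Rightarrow> real"
  assumes I: "finite I" "I \<noteq> {}" and \<alpha>: "0 \<le> \<alpha>"
    and dom: "\<And>i. i \<in> I \<Longrightarrow> (\<Sum>j\<in>I - {i}. \<bar>A i j\<bar>) < A i i"
    and diag_le: "\<And>i. i \<in> I \<Longrightarrow> A i i \<le> C"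
    and step: "\<And>i. i \<in> I \<Longrightarrow>
      v i + \<alpha> * (\<Sum>j\<in>I. A i j * v j) = w i - \<alpha> * (\<Sum>j\<in>I. A i j * w j) + r i"
    and r: "\<And>i. i \<in> I \<Longrightarrow> \<bar>r i\<bar> \<le> \<beta>"
  shows "max_norm I v \<le> exp (2 * \<alpha> * C) * max_norm I w + \<beta>"
proof -
  obtain i where i: "i \<in> I" and vi: "\<bar>v i\<bar> = max_norm I v"
    using max_norm_attained[OF I] by blast
  define D where "D = A i i"
  define S where "S = (\<Sum>j\<in>I - {i}. \<bar>A i j\<bar>)"
  define p where "p = (\<Sum>j\<in>I. A i j * v j) - D * v i"
  define q where "q = (\<Sum>j\<in>I. A i j * w j) - D * w i"
  have S: "0 \<le> S" "S < D" "D \<le> C"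
    using dom[OF i] diag_le[OF i] by (auto simp: S_def D_def intro: sum_nonneg)
  have p: "\<bar>p\<bar> \<le> S * max_norm I v" and q: "\<bar>q\<bar> \<le> S * max_norm I w"
    using row_offdiag_le[OF I(1) i] by (auto simp: p_def q_def S_def D_def)
  have eq: "(1 + \<alpha> * D) * v i + \<alpha> * p = (1 - \<alpha> * D) * w i - \<alpha> * q + r i"
    using step[OF i] by (simp add: p_def q_def algebra_simps)
  have "\<alpha> * (S * max_norm I v) \<le> \<alpha> * (D * max_norm I v)"
    using S \<alpha> max_norm_nonneg[OF I, of v] by (intro mult_left_mono mult_right_mono) auto
  then have "max_norm I v \<le> (1 + \<alpha> * D) * max_norm I v - \<alpha> * (S * max_norm I v)"
    by (simp add: algebra_simps)
  also have "\<dots> \<le> \<bar>(1 + \<alpha> * D) * v i + \<alpha> * p\<bar>"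
  proof -
    have "\<bar>(1 + \<alpha> * D) * v i\<bar> = (1 + \<alpha> * D) * max_norm I v"
      using S \<alpha> vi by (simp add: abs_mult)
    moreover have "\<bar>\<alpha> * p\<bar> \<le> \<alpha> * (S * max_norm I v)"
      using \<alpha> p by (simp add: abs_mult mult_left_mono)
    ultimately show ?thesis by linarith
  qed
  also have "\<dots> \<le> \<bar>1 - \<alpha> * D\<bar> * max_norm I w + \<alpha> * (S * max_norm I w) + \<beta>"
  proof -
    have "\<bar>(1 - \<alpha> * D) * w i\<bar> \<le> \<bar>1 - \<alpha> * D\<bar> * max_norm I w"
      using abs_le_max_norm[OF I(1) i, of w] by (simp add: abs_mult mult_left_mono)
    moreover have "\<bar>\<alpha> * q\<bar> \<le> \<alpha> * (S * max_norm I w)"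
      using \<alpha> q by (simp add: abs_mult mult_left_mono)
    ultimately show ?thesis
      unfolding eq using r[OF i] by linarith
  qed
  also have "\<dots> = (\<bar>1 - \<alpha> * D\<bar> + \<alpha> * S) * max_norm I w + \<beta>"
    by (simp add: algebra_simps)
  also have "\<dots> \<le> exp (2 * \<alpha> * C) * max_norm I w + \<beta>"
  proof -
    have "\<alpha> * S \<le> \<alpha> * D" "\<alpha> * D \<le> \<alpha> * C" "0 \<le> \<alpha> * C"
      using S \<alpha> by (auto intro: mult_left_mono)
    moreover have "1 + 2 * (\<alpha> * C) \<le> exp (2 * \<alpha> * C)"
      using exp_ge_add_one_self[of "2 * \<alpha> * C"] by (simp add: mult.assoc)
    ultimately have "\<bar>1 - \<alpha> * D\<bar> + \<alpha> * S \<le> exp (2 * \<alpha> * C)"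
      by (cases "0 \<le> 1 - \<alpha> * D") linarith+
    then show ?thesis
      using max_norm_nonneg[OF I, of w] by (simp add: mult_right_mono)
  qed
  finally show ?thesis .
qed

lemma linear_recurrence_bound:
  fixes E :: "nat \<Rightarrow> real"
  assumes "E 0 = 0" "1 \<le> \<rho>" "0 \<le> c"
    and rec: "\<And>k. 1 \<le> k \<Longrightarrow> k \<le> N \<Longrightarrow> E k \<le> \<rho> * E (k - 1) + c"
  shows "k \<le> N \<Longrightarrow> E k \<le> real k * c * \<rho> ^ k"
proof (induction k)
  case 0
  then show ?case using assms(1) by simp
next
  case (Suc k)
  have "c * 1 \<le> c * \<rho> ^ Suc k"
    using assms(2,3) by (intro mult_left_mono one_le_power) auto
  moreover have "E (Suc k) \<le> \<rho> * E k + c" using rec[of "Suc k"] Suc.prems by simp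
  moreover have "\<rho> * E k \<le> \<rho> * (real k * c * \<rho> ^ k)"
    using Suc assms(2) by (intro mult_left_mono) auto
  ultimately have "E (Suc k) \<le> \<rho> * (real k * c * \<rho> ^ k) + c * \<rho> ^ Suc k" by simp
  also have "\<dots> = real (Suc k) * c * \<rho> ^ Suc k" by (simp add: algebra_simps)
  finally show ?case .
qed

lemma discrete_gronwall_exp:
  fixes E :: "nat \<Rightarrow> real"
  assumes "E 0 = 0" "0 \<le> \<tau>" "0 \<le> C" "0 \<le> B"
    and rec: "\<And>k. 1 \<le> k \<Longrightarrow> k \<le> N \<Longrightarrow> E k \<le> exp (\<tau> * C) * E (k - 1) + \<tau> * B"
    and "k \<le> N"
  shows "E k \<le> real N * \<tau> * B * exp (real N * \<tau> * C)"
proof -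
  have "E k \<le> real k * (\<tau> * B) * exp (\<tau> * C) ^ k"
    by (rule linear_recurrence_bound[OF assms(1) _ _ rec \<open>k \<le> N\<close>]) (use assms in simp_all)
  also have "\<dots> = (real k * \<tau>) * B * exp (real k * \<tau> * C)"
    by (simp add: exp_of_nat_mult[symmetric] mult.assoc)
  also have "\<dots> \<le> (real N * \<tau>) * B * exp (real N * \<tau> * C)"
  proof -
    have "real k * \<tau> \<le> real N * \<tau>" using assms by (simp add: mult_right_mono)
    moreover from this have "real k * \<tau> * C \<le> real N * \<tau> * C" using assms by (simp add: mult_right_mono)
    ultimately show ?thesis using assms by (intro mult_mono mult_right_mono) auto
  qed
  finally show ?thesis .
qed

lemma has_integral_inverse_abs_powr:
  fixes a b x g :: real
  assumes "a \<le> x" "x \<le> b" "g < 1"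
  shows "((\<lambda>y. 1 / \<bar>x - y\<bar> powr g) has_integral
          (((x - a) powr (1 - g) + (b - x) powr (1 - g)) / (1 - g))) {a..b}"
proof -
  have kernel: "1 / \<bar>x - y\<bar> powr g = \<bar>x - y\<bar> powr (-g)" for y
    by (simp add: powr_minus_divide)
  have exponent: "-g > -1" using assms by simp
  have "((\<lambda>t. t powr (-g)) has_integral ((b-x) powr (-g+1) / (-g+1))) {0..b-x}"
    using has_integral_powr_from_0[OF exponent] assms by simp
  from has_integral_shift_real_ivl[OF this, of "-x"]
  have shifted: "((\<lambda>y. (y + - x) powr (-g)) has_integral ((b-x) powr (-g+1) / (-g+1))) {0 - -x..(b-x) - -x}" .
  have right: "((\<lambda>y. 1 / \<bar>x - y\<bar> powr g) has_integral ((b-x) powr (1-g) / (1-g))) {x..b}"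
  proof -
    have "((\<lambda>y. (y + - x) powr (-g)) has_integral ((b-x) powr (1-g) / (1-g))) {x..b}"
      using shifted by (simp add: add.commute)
    then show ?thesis
      by (rule has_integral_spike_finite[of "{}", rotated 2]) (auto simp: kernel abs_if powr_minus_divide)
  qed
  have reflected: "((\<lambda>t. (-t) powr (-g)) has_integral ((x-a) powr (-g+1) / (-g+1))) {-(x-a)..-0}"
    using has_integral_powr_from_0[OF exponent] assms by (subst has_integral_reflect_real) simp
  have left: "((\<lambda>y. 1 / \<bar>x - y\<bar> powr g) has_integral ((x-a) powr (1-g) / (1-g))) {a..x}"
  proof -
    have "((\<lambda>y. (-(y + -x)) powr (-g)) has_integral ((x-a) powr (1-g) / (1-g))) {a..x}"
      using has_integral_shift_real_ivl[OF reflected, of "-x"] by (simp add: add.commute)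
    then show ?thesis
      by (rule has_integral_spike_finite[of "{}", rotated 2]) (auto simp: kernel abs_if powr_minus_divide)
  qed
  show ?thesis using has_integral_combine[OF assms(1,2) left right] by (simp add: add_divide_distrib)
qed

lemma xnode_mem_interval:
  assumes "a \<le> b" "0 < M" "0 \<le> s" "s \<le> real M"
  shows "xnode a b M s \<in> {a..b}"
proof -
  have "s * ((b - a) / real M) \<le> real M * ((b - a) / real M)"
    using assms by (intro mult_right_mono) auto
  then show ?thesis using assms by (simp add: xnode_def mesh_h_def)
qed

lemma dcoef_eq:
  assumes "a < b" "0 < M" "i \<le> 2 * M" "\<gamma> < 1"
  defines "x \<equiv> xnode a b M (real i / 2)"
  shows "dcoef a b \<gamma> M i = ((x - a) powr (1 - \<gamma>) + (b - x) powr (1 - \<gamma>)) / (1 - \<gamma>)"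
proof -
  have "x \<in> {a..b}" unfolding x_def using assms by (intro xnode_mem_interval) auto
  then show ?thesis unfolding dcoef_def x_def
    using has_integral_inverse_abs_powr assms by (intro integral_unique) auto
qed

lemma dcoef_le:
  assumes "a < b" "0 < M" "i \<le> 2 * M" "\<gamma> < 1"
  shows "dcoef a b \<gamma> M i \<le> 2 * (b - a) powr (1 - \<gamma>) / (1 - \<gamma>)"
proof -
  define x where "x = xnode a b M (real i / 2)"
  have x: "a \<le> x" "x \<le> b"
    using xnode_mem_interval[of a b M "real i / 2"] assms by (auto simp: x_def)
  have "(x - a) powr (1 - \<gamma>) \<le> (b - a) powr (1 - \<gamma>)" "(b - x) powr (1 - \<gamma>) \<le> (b - a) powr (1 - \<gamma>)"
    using x assms by (auto intro: powr_mono2)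
  then show ?thesis
    unfolding dcoef_eq[OF assms] x_def[symmetric] using assms by (intro divide_right_mono) auto
qed

lemma quadratic_shape_le_1:
  fixes t :: real
  assumes "0 \<le> t" "t \<le> 1"
  shows "t * (2 * t - 1) \<le> 1"
proof -
  have "t * (2 * t - 1) \<le> t * 1" using assms by (intro mult_left_mono) auto
  then show ?thesis using assms by simp
qed

lemma bubble_shape_le_1:
  fixes p h y :: real
  assumes "h > 0"
  shows "4 * (y - p) * (p + h - y) / h\<^sup>2 \<le> 1"
proof -
  have "4 * (y - p) * (p + h - y) \<le> h\<^sup>2"
    using zero_le_power2[of "2 * y - 2 * p - h"] by (simp add: power2_eq_square algebra_simps)
  then show ?thesis using assms by (simp add: divide_le_eq)
qed

lemma phi_le_1:
  assumes "a < b" "0 < M"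
  shows "phi a b M j y \<le> 1"
proof -
  define h where "h = mesh_h a b M"
  have h: "h > 0" using assms by (simp add: h_def mesh_h_def)
  have next_node: "xnode a b M (l + 1) = xnode a b M l + h" for l
    by (simp add: xnode_def h_def algebra_simps)
  have rising: "(y - p) / h * ((2 * y - (p + h + p)) / h) \<le> 1" if "p \<le> y" "y \<le> p + h" for p
    using quadratic_shape_le_1[of "(y - p) / h"] that h by (simp add: field_simps)
  have falling: "(p + h - y) / h * ((p + h + p - 2 * y) / h) \<le> 1" if "p \<le> y" "y \<le> p + h" for p
    using quadratic_shape_le_1[of "(p + h - y) / h"] that h by (simp add: field_simps)
  show ?thesis
  proof (cases "even j")
    case True
    define l where "l = real (j div 2)"
    have "xnode a b M l = xnode a b M (l - 1) + h" "xnode a b M (l + 1) = xnode a b M l + h"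
      using next_node[of "l - 1"] next_node[of l] by simp_all
    then show ?thesis
      using True rising[of "xnode a b M (l - 1)"] falling[of "xnode a b M l"]
      unfolding phi_def Let_def h_def[symmetric] l_def[symmetric] by (auto simp: algebra_simps)
  next
    case False
    define l where "l = real ((j + 1) div 2)"
    have "xnode a b M l = xnode a b M (l - 1) + h"
      using next_node[of "l - 1"] by simp
    then show ?thesis
      using False bubble_shape_le_1[OF h, of y "xnode a b M (l - 1)"]
      unfolding phi_def Let_def h_def[symmetric] l_def[symmetric] by auto
  qed
qed

text \<open>A nonzero Henstock--Kurzweil integral certifies integrability, so the hypothesis
  \<open>g\<^sub>i\<^sub>j \<noteq> 0\<close> replaces an integrability proof for the piecewise polynomial integrand.\<close>

lemma gcoef_le_dcoef:
  assumes "a < b" "0 < M" "i \<le> 2 * M" "\<gamma> < 1" "gcoef a b \<gamma> M i j \<noteq> 0"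
  shows "gcoef a b \<gamma> M i j \<le> dcoef a b \<gamma> M i"
proof -
  define x where "x = xnode a b M (real i / 2)"
  have x: "a \<le> x" "x \<le> b"
    using xnode_mem_interval[of a b M "real i / 2"] assms by (auto simp: x_def)
  have "(\<lambda>y. phi a b M j y / \<bar>x - y\<bar> powr \<gamma>) integrable_on {a..b}"
    using assms(5) not_integrable_integral unfolding gcoef_def x_def by fastforce
  moreover have "(\<lambda>y. 1 / \<bar>x - y\<bar> powr \<gamma>) integrable_on {a..b}"
    using has_integral_inverse_abs_powr[OF x assms(4)] by blast
  ultimately show ?thesis
    unfolding gcoef_def dcoef_def x_def[symmetric]
    by (rule integral_le) (use phi_le_1[OF assms(1,2)] in \<open>auto intro: divide_right_mono\<close>)
qed

lemma Acoll_diag_bounds: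
  assumes "a < b" "0 < M" "i \<le> 2 * M" "\<gamma> < 1" "gcoef a b \<gamma> M i i > 0"
    and dom: "\<bar>Acoll a b \<gamma> M i i\<bar> > (\<Sum>j\<in>J - {i}. \<bar>Acoll a b \<gamma> M i j\<bar>)"
  shows "(\<Sum>j\<in>J - {i}. \<bar>Acoll a b \<gamma> M i j\<bar>) < Acoll a b \<gamma> M i i"
    and "Acoll a b \<gamma> M i i \<le> 2 * (b - a) powr (1 - \<gamma>) / (1 - \<gamma>)"
proof -
  have diag: "Acoll a b \<gamma> M i i = dcoef a b \<gamma> M i - gcoef a b \<gamma> M i i"
    by (simp add: Acoll_def)
  have "gcoef a b \<gamma> M i i \<le> dcoef a b \<gamma> M i"
    using assms by (intro gcoef_le_dcoef) auto
  then show "(\<Sum>j\<in>J - {i}. \<bar>Acoll a b \<gamma> M i j\<bar>) < Acoll a b \<gamma> M i i"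
    using dom diag by simp
  show "Acoll a b \<gamma> M i i \<le> 2 * (b - a) powr (1 - \<gamma>) / (1 - \<gamma>)"
    using dcoef_le[OF assms(1-4)] assms(5) diag by simp
qed

lemma CN_error_equation:
  assumes "CN_solution a b \<gamma> M N \<tau> u0 u f U" "\<tau> \<noteq> 0" "k \<in> {1..N}" "i \<in> {1..2 * M - 1}"
  defines "e \<equiv> \<lambda>k i. unodal a b M u \<tau> k i - U k i"
  shows "e k i + \<tau> / 2 * Amul a b \<gamma> M (e k) i
    = e (k - 1) i - \<tau> / 2 * Amul a b \<gamma> M (e (k - 1)) i + \<tau> * resid a b \<gamma> M u f \<tau> k i"
proof -
  have Amul_diff: "Amul a b \<gamma> M (e k) i = Amul a b \<gamma> M (unodal a b M u \<tau> k) i - Amul a b \<gamma> M (U k) i"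
    for k unfolding Amul_def e_def by (simp add: algebra_simps sum_subtractf)
  have "\<tau> * resid a b \<gamma> M u f \<tau> k i =
      (unodal a b M u \<tau> k i + \<tau> / 2 * Amul a b \<gamma> M (unodal a b M u \<tau> k) i)
      - (unodal a b M u \<tau> (k - 1) i - \<tau> / 2 * Amul a b \<gamma> M (unodal a b M u \<tau> (k - 1)) i)
      - \<tau> * Fsrc a b M f \<tau> k i - \<tau> * Kbd a b \<gamma> M u \<tau> k i"
    using \<open>\<tau> \<noteq> 0\<close> by (simp add: resid_def)
  then show ?thesis
    using assms(1,3,4) unfolding CN_solution_def Amul_diff by (simp add: e_def algebra_simps)
qed

definition CN_error :: "real \<Rightarrow> real \<Rightarrow> nat \<Rightarrow> (real \<Rightarrow> real \<Rightarrow> real) \<Rightarrow> real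
    \<Rightarrow> (nat \<Rightarrow> nat \<Rightarrow> real) \<Rightarrow> nat \<Rightarrow> real" where
  "CN_error a b M u \<tau> U k = max_norm {1..2 * M - 1} (\<lambda>i. unodal a b M u \<tau> k i - U k i)"

lemma CN_error_initial:
  assumes "CN_solution a b \<gamma> M N \<tau> u0 u f U" "\<forall>x \<in> {a..b}. u x 0 = u0 x" "a < b" "0 < M"
  shows "CN_error a b M u \<tau> U 0 = 0"
proof -
  have I: "finite {1..2 * M - 1}" "{1..2 * M - 1} \<noteq> {}" using assms(4) by auto
  obtain i where i: "i \<in> {1..2 * M - 1}" "\<bar>unodal a b M u \<tau> 0 i - U 0 i\<bar> = CN_error a b M u \<tau> U 0"
    unfolding CN_error_def by (rule max_norm_attained[OF I])
  have "xnode a b M (real i / 2) \<in> {a..b}"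
    using assms(3,4) i(1) by (intro xnode_mem_interval) auto
  then have "unodal a b M u \<tau> 0 i = U 0 i"
    using assms(1,2) i(1) by (simp add: CN_solution_def unodal_def)
  then show ?thesis using i(2) by simp
qed

lemma CN_error_step:
  assumes "a < b" "0 < M" "\<gamma> < 1" "0 < \<tau>"
    and scheme: "CN_solution a b \<gamma> M N \<tau> u0 u f U" and k: "k \<in> {1..N}"
    and gpos: "\<forall>i \<in> {1..2 * M - 1}. gcoef a b \<gamma> M i i > 0"
    and diagdom: "\<forall>i \<in> {1..2 * M - 1}.
      \<bar>Acoll a b \<gamma> M i i\<bar> > (\<Sum>j \<in> {1..2 * M - 1} - {i}. \<bar>Acoll a b \<gamma> M i j\<bar>)"
    and resid: "\<forall>i \<in> {1..2 * M - 1}. \<bar>resid a b \<gamma> M u f \<tau> k i\<bar> \<le> B"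
  shows "CN_error a b M u \<tau> U k
    \<le> exp (\<tau> * (2 * (b - a) powr (1 - \<gamma>) / (1 - \<gamma>))) * CN_error a b M u \<tau> U (k - 1) + \<tau> * B"
proof -
  define I where "I = {1..2 * M - 1}"
  have I: "finite I" "I \<noteq> {}" using assms(2) by (auto simp: I_def)
  have "CN_error a b M u \<tau> U k
    \<le> exp (2 * (\<tau> / 2) * (2 * (b - a) powr (1 - \<gamma>) / (1 - \<gamma>))) * CN_error a b M u \<tau> U (k - 1) + \<tau> * B"
    unfolding CN_error_def I_def[symmetric]
  proof (rule crank_nicolson_step_max_norm[OF I])
    fix i assume i: "i \<in> I"
    have row: "i \<le> 2 * M" "0 < gcoef a b \<gamma> M i i"
        "\<bar>Acoll a b \<gamma> M i i\<bar> > (\<Sum>j\<in>I - {i}. \<bar>Acoll a b \<gamma> M i j\<bar>)"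
      using i gpos diagdom by (auto simp: I_def)
    show "(\<Sum>j\<in>I - {i}. \<bar>Acoll a b \<gamma> M i j\<bar>) < Acoll a b \<gamma> M i i"
      "Acoll a b \<gamma> M i i \<le> 2 * (b - a) powr (1 - \<gamma>) / (1 - \<gamma>)"
      using Acoll_diag_bounds[OF assms(1,2) row(1) assms(3) row(2,3)] by simp_all
    show "\<bar>\<tau> * resid a b \<gamma> M u f \<tau> k i\<bar> \<le> \<tau> * B"
      using resid i assms(4) by (auto simp: I_def abs_mult)
    show "unodal a b M u \<tau> k i - U k i
          + \<tau> / 2 * (\<Sum>j\<in>I. Acoll a b \<gamma> M i j * (unodal a b M u \<tau> k j - U k j))
        = unodal a b M u \<tau> (k - 1) i - U (k - 1) i
          - \<tau> / 2 * (\<Sum>j\<in>I. Acoll a b \<gamma> M i j * (unodal a b M u \<tau> (k - 1) j - U (k - 1) j))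
          + \<tau> * resid a b \<gamma> M u f \<tau> k i"
      using CN_error_equation[OF scheme] assms(4) k i unfolding Amul_def I_def by simp
  qed (use assms(4) in simp)
  then show ?thesis by simp
qed

theorem theorem3p7:
  fixes a b \<gamma> T C_R :: real and M N :: nat
    and u ut f :: "real \<Rightarrow> real \<Rightarrow> real" and u0 :: "real \<Rightarrow> real"
    and U :: "nat \<Rightarrow> nat \<Rightarrow> real"
  assumes ab: "a < b" and gam: "0 < \<gamma>" "\<gamma> < 1" and M2: "M \<ge> 2"
    and T: "T > 0" and N1: "N \<ge> 1"
    and pde: "\<forall>x \<in> {a<..<b}. \<forall>t \<in> {0<..T}.
                 ((\<lambda>s. u x s) has_real_derivative ut x t) (at t) \<and>
                 ut x t + integral {a..b} (\<lambda>y. (u x t - u y t) / \<bar>x - y\<bar> powr \<gamma>) = f x t"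
    and init: "\<forall>x \<in> {a..b}. u x 0 = u0 x"
    and gpos: "\<forall>i \<in> {1..2 * M - 1}. \<forall>j \<in> {1..2 * M - 1}. gcoef a b \<gamma> M i j > 0"
    and diagdom: "\<forall>i \<in> {1..2 * M - 1}.
                    \<bar>Acoll a b \<gamma> M i i\<bar> > (\<Sum>j \<in> {1..2 * M - 1} - {i}. \<bar>Acoll a b \<gamma> M i j\<bar>)"
    and scheme: "CN_solution a b \<gamma> M N (T / real N) u0 u f U"
    and resbound: "\<forall>k \<in> {1..N}. \<forall>i \<in> {1..2 * M - 1}.
        \<bar>resid a b \<gamma> M u f (T / real N) k i\<bar>
          \<le> C_R * ((T / real N)\<^sup>2 + mesh_h a b M powr (4 - \<gamma>))"
  shows "\<forall>k \<in> {0..N}.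
     Max ((\<lambda>i. \<bar>u (xnode a b M (real i / 2)) (real k * (T / real N)) - U k i\<bar>) ` {1..2 * M - 1})
       \<le> C_R * T * exp (T * (2 * (b - a) powr (1 - \<gamma>) / (1 - \<gamma>)))
           * ((T / real N)\<^sup>2 + mesh_h a b M powr (4 - \<gamma>))"
proof -
  \<comment> \<open>The equation itself (hypothesis \<open>pde\<close>) enters only through the residual bound.\<close>
  define \<tau> where "\<tau> = T / real N"
  define C_a where "C_a = 2 * (b - a) powr (1 - \<gamma>) / (1 - \<gamma>)"
  define B where "B = C_R * (\<tau>\<^sup>2 + mesh_h a b M powr (4 - \<gamma>))"
  have \<tau>: "0 < \<tau>" "real N * \<tau> = T" using T N1 by (auto simp: \<tau>_def)
  have "\<bar>resid a b \<gamma> M u f \<tau> 1 1\<bar> \<le> B"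
    using resbound N1 M2 by (auto simp: B_def \<tau>_def)
  then have B: "0 \<le> B" by (rule order.trans[OF abs_ge_zero])
  have step: "CN_error a b M u \<tau> U k \<le> exp (\<tau> * C_a) * CN_error a b M u \<tau> U (k - 1) + \<tau> * B"
    if "1 \<le> k" "k \<le> N" for k
    using CN_error_step[OF ab _ gam(2) \<tau>(1) scheme[folded \<tau>_def]] gpos diagdom resbound M2 that
    by (simp add: C_a_def B_def \<tau>_def)
  have "CN_error a b M u \<tau> U k \<le> T * B * exp (T * C_a)" if "k \<le> N" for k
    using discrete_gronwall_exp[OF CN_error_initial[OF scheme[folded \<tau>_def] init ab] _ _ B step that]
      \<tau> ab gam M2 by (simp add: C_a_def)
  then show ?thesis
    by (simp add: CN_error_def max_norm_def unodal_def B_def C_a_def \<tau>_def mult_ac)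
qed

end
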